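(* Let $\mathcal G=(\mathcal V,\mathcal E)$ be a strongly connected directed graph on $\mathcal V=\{1,\dots,n\}$, let $\mathcal D$ be an upper bound on its diameter, and let $\mathcal P=[p_{ij}]$ be a primitive column-stochastic weighted adjacency matrix of $\mathcal G$. Let $\varepsilon>0$ and let $u_i^0\in\mathbb R^p$, $i\in\mathcal V$, be arbitrary initial vectors. If all agents execute the finite-time $\varepsilon$-consensus protocol described in the context, then for every agent $i\in\mathcal V$ the protocol terminates after finitely many iterations, i.e. there is a finite $m$ with $\widehat R_i^{m-1}<\varepsilon$.
   Context: Conventions: $(i,j)\in\mathcal E$ denotes a directed edge from $j$ to $i$; the in-neighborhood of $i$ is $\mathcal N_i^-=\{j\neq i:(i,j)\in\mathcal E\}$. The graph is strongly connected: for every ordered pair of distinct nodes there is a directed path between them. $\mathcal P$ is column-stochastic ($p_{ij}\ge 0$, $\sum_{i}p_{ij}=1$ for every $j$), primitive (irreducible with a unique eigenvalue of maximum modulus), and a weighted adjacency matrix of $\mathcal G$ ($p_{ij}=0$ unless $j=i$ or $j\in\mathcal N_i^-$). The diameter of $\mathcal G$ is the longest shortest directed path length between two nodes. Norms are Euclidean. Finite-time $\varepsilon$-consensus protocol: each agent $i$ sets $w_i^0=u_i^0$, $v_i^0=1$, $R_i^0=0$, $m=1$, and for $t=0,1,2,\dots$ computes $u_i^{t+1}=p_{ii}u_i^t+\sum_{j\in\mathcal N_i^-}p_{ij}u_j^t$, $v_i^{t+1}=p_{ii}v_i^t+\sum_{j\in\mathcal N_i^-}p_{ij}v_j^t$,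 $w_i^{t+1}=u_i^{t+1}/v_i^{t+1}$, and $R_i^{t+1}=\max_{j\in\mathcal N_i^-}\{\|w_i^{t+1}-w_j^{t}\|+R_j^{t}\}$. Whenever $t=m\mathcal D-1$, agent $i$ sets $\widehat R_i^{m-1}=R_i^{t+1}$; if $\widehat R_i^{m-1}<\varepsilon$ it terminates (declares $\varepsilon$-consensus), otherwise it resets $R_i^{t+1}=0$ and sets $m\leftarrow m+1$. *)

theory Defs
  imports "HOL-Analysis.Analysis"
begin

text \<open>Nodes are the elements of a finite type 'v.  A pair (i,j) in E is a directed edge from j to i.\<close>

definition in_nbrs :: "('v \<times> 'v) set \<Rightarrow> 'v \<Rightarrow> 'v set" where
  "in_nbrs E i = {j. j \<noteq> i \<and> (i, j) \<in> E}"

definition strongly_connected :: "('v \<times> 'v) set \<Rightarrow> bool" where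
  "strongly_connected E \<longleftrightarrow> (\<forall>i j. i \<noteq> j \<longrightarrow> (i, j) \<in> E\<^sup>+)"

definition diam_bound :: "('v \<times> 'v) set \<Rightarrow> nat \<Rightarrow> bool" where
  "diam_bound E D \<longleftrightarrow> (\<forall>i j. i \<noteq> j \<longrightarrow> (\<exists>k. 1 \<le> k \<and> k \<le> D \<and> (i, j) \<in> E ^^ k))"

definition column_stochastic :: "('v::finite \<Rightarrow> 'v \<Rightarrow> real) \<Rightarrow> bool" where
  "column_stochastic P \<longleftrightarrow> (\<forall>i j. 0 \<le> P i j) \<and> (\<forall>j. (\<Sum>i\<in>UNIV. P i j) = 1)"

definition weighted_adjacency :: "('v \<Rightarrow> 'v \<Rightarrow> real) \<Rightarrow> ('v \<times> 'v) set \<Rightarrow> bool" where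
  "weighted_adjacency P E \<longleftrightarrow> (\<forall>i j. P i j \<noteq> 0 \<longrightarrow> j = i \<or> j \<in> in_nbrs E i)"

definition irreducible_mat :: "('v \<Rightarrow> 'v \<Rightarrow> real) \<Rightarrow> bool" where
  "irreducible_mat P \<longleftrightarrow> (\<forall>i j. i \<noteq> j \<longrightarrow> (i, j) \<in> {(a, b). P a b \<noteq> 0}\<^sup>+)"

definition is_eigenvalue :: "('v::finite \<Rightarrow> 'v \<Rightarrow> real) \<Rightarrow> complex \<Rightarrow> bool" where
  "is_eigenvalue P l \<longleftrightarrow> (\<exists>x :: 'v \<Rightarrow> complex. x \<noteq> (\<lambda>_. 0) \<and>
      (\<forall>i. (\<Sum>j\<in>UNIV. complex_of_real (P i j) * x j) = l * x i))"

definition primitive_mat :: "('v::finite \<Rightarrow> 'v \<Rightarrow> real) \<Rightarrow> bool" where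
  "primitive_mat P \<longleftrightarrow> irreducible_mat P \<and>
     (\<exists>l. is_eigenvalue P l \<and> (\<forall>\<mu>. is_eigenvalue P \<mu> \<and> \<mu> \<noteq> l \<longrightarrow> cmod \<mu> < cmod l))"

text \<open>Linear iteration x^{t+1}_i = p_ii x^t_i + sum over in-neighbours of p_ij x^t_j
  (used both for u, with vector values, and for v, with v^0 = 1).\<close>
primrec cons_iter :: "('v \<Rightarrow> 'v \<Rightarrow> real) \<Rightarrow> ('v \<times> 'v) set \<Rightarrow> ('v \<Rightarrow> 'b::real_vector)
    \<Rightarrow> nat \<Rightarrow> 'v \<Rightarrow> 'b" where
  "cons_iter P E x0 0 = x0"
| "cons_iter P E x0 (Suc t) = (\<lambda>i. P i i *\<^sub>R cons_iter P E x0 t i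
      + (\<Sum>j\<in>in_nbrs E i. P i j *\<^sub>R cons_iter P E x0 t j))"

definition cons_w :: "('v \<Rightarrow> 'v \<Rightarrow> real) \<Rightarrow> ('v \<times> 'v) set \<Rightarrow> ('v \<Rightarrow> 'b::real_vector)
    \<Rightarrow> nat \<Rightarrow> 'v \<Rightarrow> 'b" where
  "cons_w P E u0 t i = inverse (cons_iter P E (\<lambda>_. 1::real) t i) *\<^sub>R cons_iter P E u0 t i"

text \<open>The maximum over a nonempty set of nonnegative numbers is
  unchanged by inserting 0; the 0 only fixes the value on an empty neighbourhood.\<close>
definition R_update :: "('v \<times> 'v) set \<Rightarrow> (nat \<Rightarrow> 'v \<Rightarrow> 'b::real_normed_vector) \<Rightarrow> nat
    \<Rightarrow> ('v \<Rightarrow> real) \<Rightarrow> 'v \<Rightarrow> real" where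
  "R_update E W t Rprev i =
     Max (insert 0 ((\<lambda>j. norm (W (Suc t) i - W t j) + Rprev j) ` in_nbrs E i))"

primrec cons_R :: "('v \<times> 'v) set \<Rightarrow> nat \<Rightarrow> (nat \<Rightarrow> 'v \<Rightarrow> 'b::real_normed_vector)
    \<Rightarrow> nat \<Rightarrow> 'v \<Rightarrow> real" where
  "cons_R E D W 0 = (\<lambda>_. 0)"
| "cons_R E D W (Suc t) = (\<lambda>i. if Suc t mod D = 0 then 0
      else R_update E W t (cons_R E D W t) i)"

text \<open>Rhat_i^{m-1} = R_i^{mD} before reset, i.e. the value computed at t = mD - 1.
  Here Rhat k corresponds to m = k + 1.\<close>
definition cons_Rhat :: "('v \<times> 'v) set \<Rightarrow> nat \<Rightarrow> (nat \<Rightarrow> 'v \<Rightarrow> 'b::real_normed_vector)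
    \<Rightarrow> nat \<Rightarrow> 'v \<Rightarrow> real" where
  "cons_Rhat E D W k i = R_update E W (Suc k * D - 1) (cons_R E D W (Suc k * D - 1)) i"

end

(*
  Primitivity of the column-stochastic matrix P forces some power P^N to be entrywise
  positive: otherwise the support digraph of P has a period d >= 2, and multiplying the
  eigenvector for 1 coordinatewise by powers of exp(2 pi i/d) along a phase function gives
  a second eigenvalue of modulus 1, while column stochasticity bounds all eigenvalues by 1.
  From time N on the weights v^t are bounded below by q = min P^N, so w^(t+s)_i is a convex
  combination of the w^t_j, and every N steps the spread max - min of each coordinate of w
  shrinks by the factor 1 - q^2/n. Hence eventually every norm (w^(t+1)_i - w^t_j) is below
  eps/D, and the quantity R, accumulated over a window of at most D such steps, stays below eps.
*)
theory Submission
  imports Defs "HOL-Library.Real_Mod"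
begin

section \<open>Periods of strongly connected digraphs\<close>

lemma nat_add_submonoid_mult_closed:
  fixes M :: "nat set"
  assumes "0 \<in> M" and "\<And>a b. a \<in> M \<Longrightarrow> b \<in> M \<Longrightarrow> a + b \<in> M" and "a \<in> M"
  shows "q * a \<in> M"
  using assms by (induction q) auto

lemma nat_add_submonoid_consecutive_cofinite:
  fixes M :: "nat set"
  assumes zero: "0 \<in> M" and add: "\<And>a b. a \<in> M \<Longrightarrow> b \<in> M \<Longrightarrow> a + b \<in> M"
    and b: "b \<in> M" "Suc b \<in> M" and n: "b * b \<le> n"
  shows "n \<in> M"
proof (cases "b = 0")
  case True
  then show ?thesis
    using nat_add_submonoid_mult_closed[OF zero add b(2), of n] by simp
next
  case False
  define q s where "q = n div b" and "s = n mod b"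
  have "s < b" "b \<le> q"
    using False n by (auto simp: q_def s_def div_le_mono[of "b * b" n b, simplified])
  then have "n = (q - s) * b + s * Suc b"
    unfolding q_def s_def by (simp add: algebra_simps)
  also have "\<dots> \<in> M"
    using add nat_add_submonoid_mult_closed[OF zero add] b by blast
  finally show ?thesis .
qed

lemma nat_add_submonoid_cofinite_or_periodic:
  fixes M :: "nat set"
  assumes zero: "0 \<in> M" and add: "\<And>a b. a \<in> M \<Longrightarrow> b \<in> M \<Longrightarrow> a + b \<in> M"
  shows "(\<exists>n0. \<forall>n\<ge>n0. n \<in> M) \<or> (\<exists>d\<ge>2. \<forall>m\<in>M. d dvd m)"
proof (cases "\<exists>b. b \<in> M \<and> Suc b \<in> M")
  case True
  then show ?thesis
    using nat_add_submonoid_consecutive_cofinite[OF zero add] by blast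
next
  case no_consecutive: False
  define gaps where "gaps = {g. 0 < g \<and> (\<exists>b\<in>M. b + g \<in> M)}"
  show ?thesis
  proof (cases "gaps = {}")
    case True
    then have "M \<subseteq> {0}"
      using zero by (force simp: gaps_def)
    then show ?thesis by auto
  next
    case False
    define d where "d = (LEAST g. g \<in> gaps)"
    have "d \<in> gaps"
      using False unfolding d_def by (metis LeastI ex_in_conv)
    then obtain b where "0 < d" "b \<in> M" "b + d \<in> M"
      unfolding gaps_def by blast
    moreover have "d \<noteq> 1"
      using no_consecutive \<open>b \<in> M\<close> \<open>b + d \<in> M\<close> by auto
    ultimately have "2 \<le> d"
      by simp
    \<comment> \<open>a non-multiple m would leave the gap m mod d < d between q(b + d) and m + qb\<close>
    moreover have "d dvd m" if "m \<in> M" for m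
    proof (rule ccontr)
      assume "\<not> d dvd m"
      define q where "q = m div d"
      have "q * (b + d) \<in> M" "m + q * b \<in> M"
        using nat_add_submonoid_mult_closed[OF zero add] add that \<open>b \<in> M\<close> \<open>b + d \<in> M\<close>
        by blast+
      moreover have "m + q * b = q * (b + d) + m mod d"
        unfolding q_def by (simp add: algebra_simps)
      ultimately have "m mod d \<in> gaps"
        using \<open>\<not> d dvd m\<close> unfolding gaps_def by (auto simp: mod_eq_0_iff_dvd[symmetric])
      then have "d \<le> m mod d"
        unfolding d_def by (rule Least_le)
      with mod_less_divisor[OF \<open>0 < d\<close>, of m] show False by simp
    qed
    with \<open>2 \<le> d\<close> show ?thesis by blast
  qed
qed

lemma nat_mod_eq_if_dvd_add:
  fixes c m n d :: nat
  assumes "d dvd c + m" and "d dvd c + n"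
  shows "m mod d = n mod d"
proof (cases "n \<le> m")
  case True
  have "d dvd (c + m) - (c + n)"
    using assms by (rule dvd_diff_nat)
  with True show ?thesis
    by (simp add: mod_eq_dvd_iff_nat)
next
  case False
  have "d dvd (c + n) - (c + m)"
    using assms by (intro dvd_diff_nat)
  with False show ?thesis
    using mod_eq_dvd_iff_nat[of m n d] by simp
qed

lemma relpow_full_of_cofinite_loops:
  fixes G :: "('v::finite \<times> 'v) set"
  assumes conn: "\<And>i j. (i, j) \<in> G\<^sup>*" and loops: "\<And>n. n0 \<le> n \<Longrightarrow> (r, r) \<in> G ^^ n"
  shows "\<exists>N. \<forall>i j. (i, j) \<in> G ^^ N"
proof -
  have "\<forall>i. \<exists>n. (i, r) \<in> G ^^ n" "\<forall>j. \<exists>n. (r, j) \<in> G ^^ n"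
    using conn by (simp_all add: rtrancl_power)
  then obtain a c where a: "\<forall>i. (i, r) \<in> G ^^ a i" and c: "\<forall>j. (r, j) \<in> G ^^ c j"
    by (auto dest!: choice)
  define A C where "A = Max (range a)" and "C = Max (range c)"
  have "(i, j) \<in> G ^^ (A + n0 + C)" for i j
  proof -
    have "a i \<le> A" "c j \<le> C"
      unfolding A_def C_def by simp_all
    then have "A + n0 + C = a i + (A + n0 + C - a i - c j) + c j"
      by simp
    have "(r, r) \<in> G ^^ (A + n0 + C - a i - c j)"
      using \<open>a i \<le> A\<close> \<open>c j \<le> C\<close> by (intro loops) simp
    then have "(i, j) \<in> G ^^ (a i + (A + n0 + C - a i - c j) + c j)"
      using a c by (blast intro: relpow_trans)
    with \<open>A + n0 + C = a i + (A + n0 + C - a i - c j) + c j\<close> show ?thesis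
      by simp
  qed
  then show ?thesis by blast
qed

lemma relpow_phase_of_periodic_loops:
  fixes G :: "('v \<times> 'v) set"
  assumes conn: "\<And>i j. (i, j) \<in> G\<^sup>*" and periodic: "\<And>n. (r, r) \<in> G ^^ n \<Longrightarrow> d dvd n"
  shows "\<exists>k. \<forall>i j. (i, j) \<in> G \<longrightarrow> k i = (k j + 1) mod d"
proof -
  have "\<forall>i. \<exists>n. (i, r) \<in> G ^^ n"
    using conn by (simp add: rtrancl_power)
  then obtain a where a: "\<forall>i. (i, r) \<in> G ^^ a i"
    by (auto dest!: choice)
  \<comment> \<open>closing two walks from r to i by one walk back gives two loops at r\<close>
  have phase: "n mod d = a i mod d" if "(i, r) \<in> G ^^ n" for i n
  proof -
    obtain c where "(r, i) \<in> G ^^ c"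
      using conn rtrancl_power by blast
    then have "d dvd c + n" "d dvd c + a i"
      using a that by (blast intro: periodic relpow_trans)+
    then show ?thesis
      by (rule nat_mod_eq_if_dvd_add)
  qed
  have "a i mod d = (a j mod d + 1) mod d" if "(i, j) \<in> G" for i j
  proof -
    have "(i, r) \<in> G ^^ Suc (a j)"
      using a that by (blast intro: relpow_Suc_I2)
    then show ?thesis
      using phase by (simp add: mod_Suc_eq)
  qed
  then show ?thesis
    by (intro exI[of _ "\<lambda>i. a i mod d"]) blast
qed

lemma strongly_connected_relpow_full_or_periodic:
  fixes G :: "('v::finite \<times> 'v) set"
  assumes conn: "\<And>i j. (i, j) \<in> G\<^sup>*"
  shows "(\<exists>N. \<forall>i j. (i, j) \<in> G ^^ N)
    \<or> (\<exists>d::nat. 2 \<le> d \<and> (\<exists>k. \<forall>i j. (i, j) \<in> G \<longrightarrow> k i = (k j + 1) mod d))"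
proof -
  fix r :: 'v
  have "(\<exists>n0. \<forall>n\<ge>n0. n \<in> {n. (r, r) \<in> G ^^ n}) \<or> (\<exists>d\<ge>2. \<forall>m\<in>{n. (r, r) \<in> G ^^ n}. d dvd m)"
    by (rule nat_add_submonoid_cofinite_or_periodic) (auto simp: relpow_add)
  then show ?thesis
  proof (elim disjE exE conjE)
    fix n0 assume "\<forall>n\<ge>n0. n \<in> {n. (r, r) \<in> G ^^ n}"
    then show ?thesis
      using relpow_full_of_cofinite_loops[OF conn, of n0 r] by blast
  next
    fix d :: nat assume "2 \<le> d" "\<forall>m\<in>{n. (r, r) \<in> G ^^ n}. d dvd m"
    then show ?thesis
      using relpow_phase_of_periodic_loops[OF conn, of r d] by blast
  qed
qed

section \<open>Primitive column-stochastic matrices have a positive power\<close>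

lemma column_stochastic_eigenvalue_1:
  fixes P :: "'v::finite \<Rightarrow> 'v \<Rightarrow> real"
  assumes cs: "column_stochastic P"
  shows "is_eigenvalue P 1"
proof -
  define f where "f = (\<lambda>x::real^'v. \<chi> i. (\<Sum>j\<in>UNIV. P i j * x$j) - x$i)"
  have lin: "linear f"
    unfolding f_def
    by (rule linearI) (auto simp: vec_eq_iff sum.distrib sum_distrib_left algebra_simps)
  \<comment> \<open>f = P - I; as the columns of P sum to 1, the range of f misses every vector of coordinate sum 1\<close>
  have sum_f: "(\<Sum>i\<in>UNIV. f x $ i) = 0" for x
  proof -
    have "(\<Sum>i\<in>UNIV. \<Sum>j\<in>UNIV. P i j * x$j) = (\<Sum>j\<in>UNIV. (\<Sum>i\<in>UNIV. P i j) * x$j)"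
      by (subst sum.swap) (simp add: sum_distrib_right)
    then show ?thesis
      using cs by (simp add: f_def sum_subtractf column_stochastic_def)
  qed
  fix i0 :: 'v
  have no_preimage: "f x \<noteq> axis i0 1" for x
    using sum_f[of x] by (auto simp: axis_def if_distrib sum.If_cases)
  have "\<not> surj f"
  proof
    assume "surj f"
    then obtain x where "axis i0 1 = f x"
      by (rule surjE)
    then show False
      using no_preimage[of x] by simp
  qed
  then have "\<not> inj f"
    using linear_inj_imp_surj[OF lin] by auto
  then obtain x where x: "x \<noteq> 0" "f x = 0"
    using linear_injective_0[OF lin] by auto
  show ?thesis
    unfolding is_eigenvalue_def
  proof (intro exI[of _ "\<lambda>j. complex_of_real (x$j)"] conjI allI)
    show "(\<lambda>j. complex_of_real (x$j)) \<noteq> (\<lambda>_. 0)"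
      using x(1) by (auto simp: vec_eq_iff fun_eq_iff)
    fix i
    have "(\<Sum>j\<in>UNIV. P i j * x$j) = x$i"
      using arg_cong[OF x(2), of "\<lambda>y. y $ i"] by (simp add: f_def)
    then have "complex_of_real (\<Sum>j\<in>UNIV. P i j * x$j) = complex_of_real (x$i)"
      by simp
    then show "(\<Sum>j\<in>UNIV. complex_of_real (P i j) * complex_of_real (x$j)) = 1 * complex_of_real (x$i)"
      by simp
  qed
qed

lemma column_stochastic_eigenvalue_norm_le_1:
  fixes P :: "'v::finite \<Rightarrow> 'v \<Rightarrow> real"
  assumes cs: "column_stochastic P" and ev: "is_eigenvalue P l"
  shows "cmod l \<le> 1"
proof -
  obtain x where x: "x \<noteq> (\<lambda>_. 0)" "\<And>i. (\<Sum>j\<in>UNIV. complex_of_real (P i j) * x j) = l * x i"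
    using ev unfolding is_eigenvalue_def by blast
  have P_nonneg: "P i j \<ge> 0" for i j
    using cs by (simp add: column_stochastic_def)
  have "cmod l * (\<Sum>i\<in>UNIV. cmod (x i)) = (\<Sum>i\<in>UNIV. cmod (\<Sum>j\<in>UNIV. complex_of_real (P i j) * x j))"
    by (simp add: x(2) sum_distrib_left norm_mult)
  also have "\<dots> \<le> (\<Sum>i\<in>UNIV. \<Sum>j\<in>UNIV. P i j * cmod (x j))"
    by (intro sum_mono order_trans[OF norm_sum]) (simp add: norm_mult P_nonneg)
  also have "\<dots> = (\<Sum>j\<in>UNIV. (\<Sum>i\<in>UNIV. P i j) * cmod (x j))"
    by (subst sum.swap) (simp add: sum_distrib_right)
  also have "\<dots> = (\<Sum>j\<in>UNIV. cmod (x j))"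
    using cs by (simp add: column_stochastic_def)
  finally have "cmod l * (\<Sum>i\<in>UNIV. cmod (x i)) \<le> (\<Sum>i\<in>UNIV. cmod (x i))" .
  moreover obtain i0 where "x i0 \<noteq> 0"
    using x(1) by auto
  then have "0 < (\<Sum>i\<in>UNIV. cmod (x i))"
    using sum_pos2[of UNIV i0 "\<lambda>i. cmod (x i)"] by auto
  ultimately show ?thesis
    by (simp add: mult_le_cancel_right2)
qed

lemma cyclic_phase_eigenvalue_rotate:
  fixes P :: "'v::finite \<Rightarrow> 'v \<Rightarrow> real" and k :: "'v \<Rightarrow> nat"
  assumes ev: "is_eigenvalue P l"
    and phase: "\<And>i j. P i j \<noteq> 0 \<Longrightarrow> k i = (k j + 1) mod d"
  shows "is_eigenvalue P (l * cis (2 * pi / d))"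
proof -
  define \<omega> where "\<omega> = cis (2 * pi / d)"
  obtain x where x: "x \<noteq> (\<lambda>_. 0)" "\<And>i. (\<Sum>j\<in>UNIV. complex_of_real (P i j) * x j) = l * x i"
    using ev unfolding is_eigenvalue_def by blast
  have "\<omega> ^ d = 1"
  proof (cases "d = 0")
    case False
    have "\<omega> ^ d = cis (real d * (2 * pi / d))"
      unfolding \<omega>_def by (rule Complex.DeMoivre)
    with False show ?thesis by simp
  qed simp
  have \<omega>_pow_mod: "\<omega> ^ (n mod d) = \<omega> ^ n" for n
  proof -
    have "\<omega> ^ n = (\<omega> ^ d) ^ (n div d) * \<omega> ^ (n mod d)"
      by (simp only: power_mult[symmetric] power_add[symmetric] mult_div_mod_eq)
    with \<open>\<omega> ^ d = 1\<close> show ?thesis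
      by simp
  qed
  have \<omega>_nonzero: "\<omega> \<noteq> 0"
    by (simp add: \<omega>_def)
  have "(\<Sum>j\<in>UNIV. complex_of_real (P i j) * (x j / \<omega> ^ k j)) = l * \<omega> * (x i / \<omega> ^ k i)" for i
  proof -
    have "complex_of_real (P i j) * (x j / \<omega> ^ k j)
        = complex_of_real (P i j) * x j / \<omega> ^ k i * \<omega>" for j
    proof (cases "P i j = 0")
      case False
      then have "\<omega> ^ k i = \<omega> ^ k j * \<omega>"
        using phase[OF False] \<omega>_pow_mod[of "k j + 1"] by simp
      then show ?thesis
        using \<omega>_nonzero by (simp add: field_simps)
    qed simp
    then have "(\<Sum>j\<in>UNIV. complex_of_real (P i j) * (x j / \<omega> ^ k j))
        = (\<Sum>j\<in>UNIV. complex_of_real (P i j) * x j) / \<omega> ^ k i * \<omega>"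
      by (simp add: sum_divide_distrib sum_distrib_right)
    also have "\<dots> = l * \<omega> * (x i / \<omega> ^ k i)"
      unfolding x(2) by (simp add: divide_inverse ac_simps)
    finally show ?thesis .
  qed
  moreover have "(\<lambda>j. x j / \<omega> ^ k j) \<noteq> (\<lambda>_. 0)"
    using x(1) \<omega>_nonzero by (auto simp: fun_eq_iff)
  ultimately show ?thesis
    unfolding is_eigenvalue_def \<omega>_def by blast
qed

lemma primitive_column_stochastic_unimodular_eigenvalue:
  fixes P :: "'v::finite \<Rightarrow> 'v \<Rightarrow> real"
  assumes cs: "column_stochastic P" and pr: "primitive_mat P"
    and ev: "is_eigenvalue P \<mu>" and norm: "cmod \<mu> = 1"
  shows "\<mu> = 1"
proof (rule ccontr)
  assume "\<mu> \<noteq> 1"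
  obtain l where l: "is_eigenvalue P l" "\<And>\<nu>. is_eigenvalue P \<nu> \<and> \<nu> \<noteq> l \<Longrightarrow> cmod \<nu> < cmod l"
    using pr unfolding primitive_mat_def by blast
  have "1 < cmod l"
    using l(2)[of 1] l(2)[of \<mu>] column_stochastic_eigenvalue_1[OF cs] ev norm \<open>\<mu> \<noteq> 1\<close>
    by (cases "l = 1") auto
  with column_stochastic_eigenvalue_norm_le_1[OF cs l(1)] show False
    by simp
qed

lemma primitive_column_stochastic_not_cyclic:
  fixes P :: "'v::finite \<Rightarrow> 'v \<Rightarrow> real" and k :: "'v \<Rightarrow> nat"
  assumes cs: "column_stochastic P" and pr: "primitive_mat P" and d: "2 \<le> d"
    and phase: "\<And>i j. P i j \<noteq> 0 \<Longrightarrow> k i = (k j + 1) mod d"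
  shows False
proof -
  have "is_eigenvalue P (cis (2 * pi / d))"
    using cyclic_phase_eigenvalue_rotate[OF column_stochastic_eigenvalue_1[OF cs] phase] by simp
  then have "cis (2 * pi / d) = 1"
    using primitive_column_stochastic_unimodular_eigenvalue[OF cs pr] by simp
  then obtain n :: int where "2 * pi / d = of_int n * (2 * pi)"
    by (auto simp: cis_eq_1_iff)
  then have "1 = of_int n * real d"
    using d by (simp add: field_simps)
  then have "real_of_int (n * int d) = 1"
    by simp
  then have "n * int d = 1"
    by (simp only: of_int_eq_1_iff)
  then show False
    using d by (simp add: zmult_eq_1_iff)
qed

lemma primitive_column_stochastic_relpow_full:
  fixes P :: "'v::finite \<Rightarrow> 'v \<Rightarrow> real"
  assumes cs: "column_stochastic P" and pr: "primitive_mat P"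
  shows "\<exists>N. \<forall>i j. (i, j) \<in> {(a, b). P a b \<noteq> 0} ^^ N"
proof -
  have "(i, j) \<in> {(a, b). P a b \<noteq> 0}\<^sup>*" for i j
    using pr by (cases "i = j") (auto simp: primitive_mat_def irreducible_mat_def
        intro: trancl_into_rtrancl)
  from strongly_connected_relpow_full_or_periodic[OF this] show ?thesis
  proof (elim disjE exE conjE)
    fix d :: nat and k
    assume "2 \<le> d" and "\<forall>i j. (i, j) \<in> {(a, b). P a b \<noteq> 0} \<longrightarrow> k i = (k j + 1) mod d"
    then show ?thesis
      using primitive_column_stochastic_not_cyclic[OF cs pr, of d k] by simp
  qed blast
qed

primrec mat_pow :: "('v::finite \<Rightarrow> 'v \<Rightarrow> real) \<Rightarrow> nat \<Rightarrow> 'v \<Rightarrow> 'v \<Rightarrow> real" where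
  "mat_pow P 0 i j = (if i = j then 1 else 0)"
| "mat_pow P (Suc n) i j = (\<Sum>k\<in>UNIV. P i k * mat_pow P n k j)"

lemma mat_pow_nonneg:
  assumes "\<And>i j. 0 \<le> P i j"
  shows "0 \<le> mat_pow P n i j"
  using assms by (induction n arbitrary: i j) (auto intro!: sum_nonneg)

lemma mat_pow_pos_if_relpow:
  assumes nonneg: "\<And>i j. 0 \<le> P i j" and path: "(i, j) \<in> {(a, b). P a b \<noteq> 0} ^^ n"
  shows "0 < mat_pow P n i j"
  using path
proof (induction n arbitrary: i)
  case 0
  then show ?case by simp
next
  case (Suc n)
  then obtain k where k: "P i k \<noteq> 0" "(k, j) \<in> {(a, b). P a b \<noteq> 0} ^^ n"
    using relpow_Suc_D2 by fastforce
  have "0 < P i k * mat_pow P n k j"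
    using k Suc.IH[OF k(2)] nonneg by (simp add: order_le_neq_trans)
  also have "\<dots> \<le> (\<Sum>k\<in>UNIV. P i k * mat_pow P n k j)"
    by (rule member_le_sum) (simp_all add: nonneg mat_pow_nonneg)
  finally show ?case by simp
qed

lemma primitive_column_stochastic_mat_pow_ge:
  fixes P :: "'v::finite \<Rightarrow> 'v \<Rightarrow> real"
  assumes cs: "column_stochastic P" and pr: "primitive_mat P"
  shows "\<exists>q>0. \<exists>N. \<forall>i j. q \<le> mat_pow P N i j"
proof -
  obtain N where N: "\<forall>i j. (i, j) \<in> {(a, b). P a b \<noteq> 0} ^^ N"
    using primitive_column_stochastic_relpow_full[OF cs pr] by blast
  define q where "q = Min (range (\<lambda>(i, j). mat_pow P N i j))"
  have "q \<in> range (\<lambda>(i, j). mat_pow P N i j)"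
    unfolding q_def by (rule Min_in) simp_all
  moreover have "0 < mat_pow P N i j" for i j
    using cs N by (intro mat_pow_pos_if_relpow) (simp_all add: column_stochastic_def)
  ultimately have "0 < q"
    by auto
  moreover have "q \<le> mat_pow P N i j" for i j
    unfolding q_def by (rule Min_le) auto
  ultimately show ?thesis
    by blast
qed

section \<open>Convergence of the ratio iteration\<close>

lemma cons_iter_Suc_eq_sum:
  fixes P :: "'v::finite \<Rightarrow> 'v \<Rightarrow> real"
  assumes "weighted_adjacency P E"
  shows "cons_iter P E x (Suc t) i = (\<Sum>j\<in>UNIV. P i j *\<^sub>R cons_iter P E x t j)"
proof -
  let ?y = "cons_iter P E x t"
  have "(\<Sum>j\<in>UNIV - {i}. P i j *\<^sub>R ?y j) = (\<Sum>j\<in>in_nbrs E i. P i j *\<^sub>R ?y j)"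
    using assms by (intro sum.mono_neutral_right) (auto simp: in_nbrs_def weighted_adjacency_def)
  then show ?thesis
    by (simp add: sum.remove[of UNIV i])
qed

lemma cons_iter_add_eq_sum:
  fixes P :: "'v::finite \<Rightarrow> 'v \<Rightarrow> real"
  assumes "weighted_adjacency P E"
  shows "cons_iter P E x (n + t) i = (\<Sum>j\<in>UNIV. mat_pow P n i j *\<^sub>R cons_iter P E x t j)"
proof (induction n arbitrary: i)
  case 0
  have "(\<Sum>j\<in>UNIV. mat_pow P 0 i j *\<^sub>R cons_iter P E x t j)
      = (\<Sum>j\<in>UNIV. if i = j then cons_iter P E x t j else 0)"
    by (intro sum.cong) auto
  then show ?case
    by simp
next
  case (Suc n)
  have "cons_iter P E x (Suc n + t) i = (\<Sum>k\<in>UNIV. P i k *\<^sub>R cons_iter P E x (n + t) k)"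
    by (simp only: add_Suc cons_iter_Suc_eq_sum[OF assms])
  also have "\<dots> = (\<Sum>k\<in>UNIV. \<Sum>j\<in>UNIV. (P i k * mat_pow P n k j) *\<^sub>R cons_iter P E x t j)"
    by (simp add: Suc scaleR_sum_right)
  also have "\<dots> = (\<Sum>j\<in>UNIV. mat_pow P (Suc n) i j *\<^sub>R cons_iter P E x t j)"
    by (subst sum.swap) (simp add: scaleR_sum_left)
  finally show ?case .
qed

lemma cons_iter_ones_nonneg:
  fixes P :: "'v::finite \<Rightarrow> 'v \<Rightarrow> real"
  assumes cs: "column_stochastic P" and wa: "weighted_adjacency P E"
  shows "0 \<le> cons_iter P E (\<lambda>_. 1::real) t i"
proof (induction t arbitrary: i)
  case (Suc t)
  show ?case
    unfolding cons_iter_Suc_eq_sum[OF wa]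
    using cs Suc.IH by (auto intro!: sum_nonneg simp: column_stochastic_def)
qed simp

lemma sum_cons_iter_ones:
  fixes P :: "'v::finite \<Rightarrow> 'v \<Rightarrow> real"
  assumes cs: "column_stochastic P" and wa: "weighted_adjacency P E"
  shows "(\<Sum>i\<in>UNIV. cons_iter P E (\<lambda>_. 1) t i) = CARD('v)"
proof (induction t)
  case (Suc t)
  have "(\<Sum>i\<in>UNIV. cons_iter P E (\<lambda>_. 1) (Suc t) i)
      = (\<Sum>j\<in>UNIV. (\<Sum>i\<in>UNIV. P i j) * cons_iter P E (\<lambda>_. 1) t j)"
    unfolding cons_iter_Suc_eq_sum[OF wa] by (subst sum.swap) (simp add: sum_distrib_right)
  with cs Suc show ?case
    by (simp add: column_stochastic_def)
qed simp

lemma cons_iter_inner: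
  "cons_iter P E x t i \<bullet> b = cons_iter P E (\<lambda>j. x j \<bullet> b) t i"
  by (induction t arbitrary: i) (simp_all add: inner_add_left inner_sum_left)

lemma cons_w_inner:
  "cons_w P E x t i \<bullet> b = cons_w P E (\<lambda>j. x j \<bullet> b) t i"
  by (simp add: cons_w_def cons_iter_inner)

lemma weighted_mean_bounds:
  fixes c z :: "'v::finite \<Rightarrow> real"
  assumes nonneg: "\<And>j. 0 \<le> c j" and pos: "0 < sum c UNIV"
  shows "Min (range z) \<le> (\<Sum>j\<in>UNIV. c j * z j) / sum c UNIV"
    and "(\<Sum>j\<in>UNIV. c j * z j) / sum c UNIV \<le> Max (range z)"
proof -
  have "(\<Sum>j\<in>UNIV. c j * Min (range z)) \<le> (\<Sum>j\<in>UNIV. c j * z j)"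
    by (intro sum_mono mult_left_mono) (simp_all add: nonneg)
  then show "Min (range z) \<le> (\<Sum>j\<in>UNIV. c j * z j) / sum c UNIV"
    using pos by (simp add: le_divide_eq sum_distrib_right[symmetric] mult.commute)
  have "(\<Sum>j\<in>UNIV. c j * z j) \<le> (\<Sum>j\<in>UNIV. c j * Max (range z))"
    by (intro sum_mono mult_left_mono) (simp_all add: nonneg)
  then show "(\<Sum>j\<in>UNIV. c j * z j) / sum c UNIV \<le> Max (range z)"
    using pos by (simp add: divide_le_eq sum_distrib_right[symmetric] mult.commute)
qed

definition spread :: "('v::finite \<Rightarrow> real) \<Rightarrow> real" where
  "spread z = Max (range z) - Min (range z)"

lemma spread_nonneg: "0 \<le> spread z"
proof -
  have "Min (range z) \<le> z j" "z j \<le> Max (range z)" for j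
    by simp_all
  from this[of undefined] show ?thesis
    unfolding spread_def by linarith
qed

lemma weighted_mean_le_Max_contract:
  fixes c z :: "'v::finite \<Rightarrow> real"
  assumes nonneg: "\<And>j. 0 \<le> c j" and pos: "0 < sum c UNIV"
    and heavy: "\<And>j. \<beta> * sum c UNIV \<le> c j"
  shows "(\<Sum>j\<in>UNIV. c j * z j) / sum c UNIV \<le> Max (range z) - \<beta> * spread z"
proof -
  let ?M = "Max (range z)"
  have "Min (range z) \<in> range z"
    by (rule Min_in) simp_all
  then obtain j0 where j0: "z j0 = Min (range z)"
    by (auto simp del: Min_in)
  have "\<beta> * sum c UNIV * spread z \<le> c j0 * (?M - z j0)"
    unfolding j0 spread_def[symmetric] by (rule mult_right_mono[OF heavy spread_nonneg])
  also have "\<dots> \<le> (\<Sum>j\<in>UNIV. c j * (?M - z j))"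
    by (rule member_le_sum) (auto intro: mult_nonneg_nonneg nonneg)
  also have "\<dots> = sum c UNIV * ?M - (\<Sum>j\<in>UNIV. c j * z j)"
    by (simp add: algebra_simps sum_subtractf sum_distrib_right)
  finally have "(\<Sum>j\<in>UNIV. c j * z j) \<le> (?M - \<beta> * spread z) * sum c UNIV"
    by (simp add: algebra_simps)
  then show ?thesis
    by (rule pos_divide_le_eq[OF pos, THEN iffD2])
qed

lemma eventually_less_if_contracting:
  fixes s :: "nat \<Rightarrow> real"
  assumes nonneg: "\<And>t. 0 \<le> s t" and mono: "\<And>u t. N \<le> t \<Longrightarrow> s (u + t) \<le> s t"
    and contract: "\<And>t. N \<le> t \<Longrightarrow> s (N + t) \<le> c * s t" and "c < 1" and "0 < e"
  shows "eventually (\<lambda>t. s t < e) sequentially"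
proof -
  define c' where "c' = max c 0"
  have decay: "s (k * N + N) \<le> c' ^ k * s N" for k
  proof (induction k)
    case (Suc k)
    have "s (Suc k * N + N) = s (N + (k * N + N))"
      by (simp add: algebra_simps)
    also have "\<dots> \<le> c' * s (k * N + N)"
      using contract[of "k * N + N"] nonneg[of "k * N + N"]
      by (simp add: c'_def order_trans[OF _ mult_right_mono])
    also have "\<dots> \<le> c' * (c' ^ k * s N)"
      using Suc by (intro mult_left_mono) (simp_all add: c'_def)
    finally show ?case by simp
  qed simp
  obtain K where K: "c' ^ K * s N < e"
  proof (cases "s N = 0")
    case False
    then have "0 < e / s N"
      using nonneg[of N] \<open>0 < e\<close> by simp
    moreover have "c' < 1"
      using \<open>c < 1\<close> by (simp add: c'_def)
    ultimately obtain K where "c' ^ K < e / s N"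
      using real_arch_pow_inv by blast
    then show ?thesis
      using that nonneg[of N] False by (simp add: less_divide_eq)
  qed (use \<open>0 < e\<close> in simp)
  have "s t < e" if "K * N + N \<le> t" for t
  proof -
    have "s t \<le> s (K * N + N)"
      using mono[of "K * N + N" "t - (K * N + N)"] that by simp
    with decay[of K] K show ?thesis
      by linarith
  qed
  then show ?thesis
    unfolding eventually_sequentially by blast
qed

locale ratio_consensus =
  fixes P :: "'v::finite \<Rightarrow> 'v \<Rightarrow> real" and E :: "('v \<times> 'v) set" and N :: nat and q :: real
  assumes column_stochastic: "column_stochastic P"
    and weighted_adjacency: "weighted_adjacency P E"
    and q_pos: "0 < q"
    and mat_pow_ge: "\<And>i j. q \<le> mat_pow P N i j"
begin

abbreviation weight :: "nat \<Rightarrow> 'v \<Rightarrow> real" where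
  "weight \<equiv> cons_iter P E (\<lambda>_. 1)"

lemma weight_nonneg: "0 \<le> weight t i"
  using cons_iter_ones_nonneg[OF column_stochastic weighted_adjacency] .

lemma weight_le_card: "weight t i \<le> CARD('v)"
  using member_le_sum[of i UNIV "weight t"] weight_nonneg
  by (simp add: sum_cons_iter_ones[OF column_stochastic weighted_adjacency])

lemma weight_add_eq_sum: "weight (u + t) i = (\<Sum>j\<in>UNIV. mat_pow P u i j * weight t j)"
  by (simp only: cons_iter_add_eq_sum[OF weighted_adjacency] real_scaleR_def)

lemma weight_ge:
  assumes "N \<le> t"
  shows "q \<le> weight t i"
proof -
  have "q \<le> q * CARD('v)"
    using q_pos by simp
  also have "\<dots> = (\<Sum>j\<in>UNIV. q * weight (t - N) j)"
    by (simp add: sum_distrib_left[symmetric] sum_cons_iter_ones[OF column_stochastic weighted_adjacency])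
  also have "\<dots> \<le> (\<Sum>j\<in>UNIV. mat_pow P N i j * weight (t - N) j)"
    by (intro sum_mono mult_right_mono mat_pow_ge weight_nonneg)
  also have "\<dots> = weight t i"
    using weight_add_eq_sum[of N "t - N"] assms by simp
  finally show ?thesis .
qed

lemma weight_pos:
  assumes "N \<le> t"
  shows "0 < weight t i"
  using weight_ge[OF assms, of i] q_pos by linarith

lemma mat_pow_weight_nonneg: "0 \<le> mat_pow P u i j * weight t j"
  using column_stochastic by (simp add: mat_pow_nonneg weight_nonneg column_stochastic_def)

lemma cons_w_weighted_mean:
  fixes x :: "'v \<Rightarrow> real"
  assumes "N \<le> t"
  shows "cons_w P E x (u + t) i
    = (\<Sum>j\<in>UNIV. (mat_pow P u i j * weight t j) * cons_w P E x t j)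
      / (\<Sum>j\<in>UNIV. mat_pow P u i j * weight t j)"
proof -
  have "weight t j * cons_w P E x t j = cons_iter P E x t j" for j
    using weight_pos[OF assms, of j] by (simp add: cons_w_def)
  then have "(\<Sum>j\<in>UNIV. (mat_pow P u i j * weight t j) * cons_w P E x t j) = cons_iter P E x (u + t) i"
    by (simp add: cons_iter_add_eq_sum[OF weighted_adjacency] mult.assoc)
  then show ?thesis
    by (simp add: cons_w_def weight_add_eq_sum divide_inverse mult.commute)
qed

lemma cons_w_between:
  fixes x :: "'v \<Rightarrow> real"
  assumes "N \<le> t"
  shows "Min (range (cons_w P E x t)) \<le> cons_w P E x (u + t) i"
    and "cons_w P E x (u + t) i \<le> Max (range (cons_w P E x t))"
proof -
  have pos: "0 < (\<Sum>j\<in>UNIV. mat_pow P u i j * weight t j)"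
    using weight_pos[of "u + t" i] assms by (simp add: weight_add_eq_sum)
  show "Min (range (cons_w P E x t)) \<le> cons_w P E x (u + t) i"
    unfolding cons_w_weighted_mean[OF assms]
    by (rule weighted_mean_bounds(1)[OF mat_pow_weight_nonneg pos])
  show "cons_w P E x (u + t) i \<le> Max (range (cons_w P E x t))"
    unfolding cons_w_weighted_mean[OF assms]
    by (rule weighted_mean_bounds(2)[OF mat_pow_weight_nonneg pos])
qed

lemma cons_w_contract:
  fixes x :: "'v \<Rightarrow> real"
  assumes "N \<le> t"
  shows "cons_w P E x (N + t) i
    \<le> Max (range (cons_w P E x t)) - q * q / CARD('v) * spread (cons_w P E x t)"
proof -
  have pos: "0 < (\<Sum>j\<in>UNIV. mat_pow P N i j * weight t j)"
    using weight_pos[of "N + t" i] assms by (simp add: weight_add_eq_sum)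
  \<comment> \<open>each coefficient is at least q * q, while their sum weight (N + t) i is at most CARD('v)\<close>
  have heavy: "q * q / CARD('v) * (\<Sum>j\<in>UNIV. mat_pow P N i j * weight t j)
      \<le> mat_pow P N i j * weight t j" for j
  proof -
    have "q * q / CARD('v) * weight (N + t) i \<le> q * q"
      using weight_le_card[of "N + t" i] q_pos by (simp add: divide_le_eq mult_left_mono)
    also have "\<dots> \<le> mat_pow P N i j * weight t j"
      using mat_pow_ge weight_ge[OF assms] q_pos column_stochastic
      by (intro mult_mono) (auto simp: mat_pow_nonneg column_stochastic_def)
    finally show ?thesis
      by (simp add: weight_add_eq_sum)
  qed
  show ?thesis
    unfolding cons_w_weighted_mean[OF assms]
    by (rule weighted_mean_le_Max_contract[OF mat_pow_weight_nonneg pos heavy])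
qed

lemma spread_cons_w_mono:
  fixes x :: "'v \<Rightarrow> real"
  assumes "N \<le> t"
  shows "spread (cons_w P E x (u + t)) \<le> spread (cons_w P E x t)"
proof -
  have "Max (range (cons_w P E x (u + t))) \<le> Max (range (cons_w P E x t))"
    using cons_w_between(2)[OF assms] by (simp add: Max_le_iff)
  moreover have "Min (range (cons_w P E x t)) \<le> Min (range (cons_w P E x (u + t)))"
    using cons_w_between(1)[OF assms] by (simp add: Min_ge_iff)
  ultimately show ?thesis
    unfolding spread_def by linarith
qed

lemma spread_cons_w_contract:
  fixes x :: "'v \<Rightarrow> real"
  assumes "N \<le> t"
  shows "spread (cons_w P E x (N + t)) \<le> (1 - q * q / CARD('v)) * spread (cons_w P E x t)"
proof -
  have "Max (range (cons_w P E x (N + t)))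
      \<le> Max (range (cons_w P E x t)) - q * q / CARD('v) * spread (cons_w P E x t)"
    using cons_w_contract[OF assms] by (simp add: Max_le_iff)
  moreover have "Min (range (cons_w P E x t)) \<le> Min (range (cons_w P E x (N + t)))"
    using cons_w_between(1)[OF assms] by (simp add: Min_ge_iff)
  moreover have "spread (cons_w P E x (N + t))
      = Max (range (cons_w P E x (N + t))) - Min (range (cons_w P E x (N + t)))"
    "spread (cons_w P E x t) = Max (range (cons_w P E x t)) - Min (range (cons_w P E x t))"
    by (simp_all only: spread_def)
  ultimately have "spread (cons_w P E x (N + t))
      \<le> spread (cons_w P E x t) - q * q / CARD('v) * spread (cons_w P E x t)"
    by linarith
  then show ?thesis
    by (simp add: algebra_simps)
qed

lemma cons_w_converges:
  fixes x :: "'v \<Rightarrow> real"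
  assumes "0 < e"
  shows "eventually (\<lambda>t. \<forall>i j. \<bar>cons_w P E x (Suc t) i - cons_w P E x t j\<bar> < e) sequentially"
proof -
  have small_spread: "eventually (\<lambda>t. spread (cons_w P E x t) < e) sequentially"
  proof (rule eventually_less_if_contracting)
    show "spread (cons_w P E x (u + t)) \<le> spread (cons_w P E x t)" if "N \<le> t" for u t
      using that by (rule spread_cons_w_mono)
    show "spread (cons_w P E x (N + t)) \<le> (1 - q * q / CARD('v)) * spread (cons_w P E x t)"
      if "N \<le> t" for t
      using that by (rule spread_cons_w_contract)
    show "1 - q * q / CARD('v) < 1"
      using q_pos by simp
  qed (simp_all add: spread_nonneg assms)
  have diff_le_spread: "\<bar>cons_w P E x (Suc t) i - cons_w P E x t j\<bar> \<le> spread (cons_w P E x t)"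
    if "N \<le> t" for t i j
  proof -
    have "Min (range (cons_w P E x t)) \<le> cons_w P E x t j" "cons_w P E x t j \<le> Max (range (cons_w P E x t))"
      by simp_all
    moreover have "Min (range (cons_w P E x t)) \<le> cons_w P E x (Suc t) i"
      "cons_w P E x (Suc t) i \<le> Max (range (cons_w P E x t))"
      using cons_w_between[OF that, of x 1 i] by simp_all
    ultimately show ?thesis
      unfolding spread_def abs_le_iff by linarith
  qed
  from small_spread eventually_ge_at_top[of N] show ?thesis
    by eventually_elim (meson diff_le_spread order_le_less_trans)
qed

lemma cons_w_converges_euclidean:
  fixes x :: "'v \<Rightarrow> 'b::euclidean_space"
  assumes "0 < e"
  shows "eventually (\<lambda>t. \<forall>i j. norm (cons_w P E x (Suc t) i - cons_w P E x t j) < e) sequentially"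
proof -
  let ?e = "e / DIM('b)"
  have coordinates_close: "eventually (\<lambda>t. \<forall>b\<in>Basis. \<forall>i j.
      \<bar>cons_w P E (\<lambda>j. x j \<bullet> b) (Suc t) i - cons_w P E (\<lambda>j. x j \<bullet> b) t j\<bar> < ?e) sequentially"
  proof (rule eventually_ball_finite)
    show "\<forall>b\<in>Basis. eventually (\<lambda>t. \<forall>i j.
        \<bar>cons_w P E (\<lambda>j. x j \<bullet> b) (Suc t) i - cons_w P E (\<lambda>j. x j \<bullet> b) t j\<bar> < ?e) sequentially"
    proof
      fix b :: 'b
      assume "b \<in> Basis"
      have "0 < ?e"
        using assms by simp
      then show "eventually (\<lambda>t. \<forall>i j.
          \<bar>cons_w P E (\<lambda>j. x j \<bullet> b) (Suc t) i - cons_w P E (\<lambda>j. x j \<bullet> b) t j\<bar> < ?e) sequentially"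
        by (rule cons_w_converges)
    qed
  qed simp
  have norm_close: "norm (cons_w P E x (Suc t) i - cons_w P E x t j) < e"
    if close: "\<forall>b\<in>Basis. \<forall>i j.
      \<bar>cons_w P E (\<lambda>j. x j \<bullet> b) (Suc t) i - cons_w P E (\<lambda>j. x j \<bullet> b) t j\<bar> < ?e"
    for t i j
  proof -
    have "norm (cons_w P E x (Suc t) i - cons_w P E x t j)
        \<le> (\<Sum>b\<in>Basis. \<bar>(cons_w P E x (Suc t) i - cons_w P E x t j) \<bullet> b\<bar>)"
      by (rule norm_le_l1)
    also have "\<dots> < (\<Sum>b\<in>(Basis::'b set). ?e)"
    proof (rule sum_strict_mono)
      fix b :: 'b
      assume "b \<in> Basis"
      then show "\<bar>(cons_w P E x (Suc t) i - cons_w P E x t j) \<bullet> b\<bar> < ?e"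
        using close by (simp add: inner_diff_left cons_w_inner)
    qed simp_all
    also have "\<dots> = e"
      by simp
    finally show ?thesis .
  qed
  from coordinates_close show ?thesis
  proof (rule eventually_mono)
    fix t
    assume "\<forall>b\<in>Basis. \<forall>i j.
      \<bar>cons_w P E (\<lambda>j. x j \<bullet> b) (Suc t) i - cons_w P E (\<lambda>j. x j \<bullet> b) t j\<bar> < ?e"
    then show "\<forall>i j. norm (cons_w P E x (Suc t) i - cons_w P E x t j) < e"
      by (intro allI norm_close)
  qed
qed

end

section \<open>Termination of the protocol\<close>

lemma R_update_less:
  fixes W :: "nat \<Rightarrow> 'v::finite \<Rightarrow> 'b::real_normed_vector"
  assumes "0 < b" and "\<And>j. j \<in> in_nbrs E i \<Longrightarrow> norm (W (Suc t) i - W t j) + R j < b"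
  shows "R_update E W t R i < b"
  unfolding R_update_def using assms by (subst Max_less_iff) auto

lemma cons_R_le:
  fixes W :: "nat \<Rightarrow> 'v::finite \<Rightarrow> 'b::real_normed_vector"
  assumes close: "\<And>t i j. T \<le> t \<Longrightarrow> norm (W (Suc t) i - W t j) < \<delta>"
    and "0 < \<delta>" and "T \<le> k * D" and "r < D"
  shows "cons_R E D W (k * D + r) i \<le> r * \<delta>"
  using \<open>r < D\<close>
proof (induction r arbitrary: i)
  case 0
  show ?case
  proof (cases "k * D")
    case 0
    show ?thesis
      unfolding \<open>k * D = 0\<close> by simp
  next
    case (Suc t)
    then have "Suc t mod D = 0"
      unfolding Suc[symmetric] by simp
    with Suc show ?thesis
      by simp
  qed
next
  case (Suc r)
  have "Suc (k * D + r) mod D = Suc r mod D"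
    by (simp add: add.commute[of "k * D"])
  with Suc.prems have no_reset: "Suc (k * D + r) mod D \<noteq> 0"
    by simp
  have "R_update E W (k * D + r) (cons_R E D W (k * D + r)) i < \<delta> + r * \<delta>"
  proof (rule R_update_less)
    fix j
    have "norm (W (Suc (k * D + r)) i - W (k * D + r) j) < \<delta>"
      using \<open>T \<le> k * D\<close> by (intro close) simp
    with Suc.IH[of j] Suc.prems show "norm (W (Suc (k * D + r)) i - W (k * D + r) j)
        + cons_R E D W (k * D + r) j < \<delta> + r * \<delta>"
      by simp
  qed (use \<open>0 < \<delta>\<close> in \<open>simp add: add_pos_nonneg\<close>)
  with no_reset show ?case
    by (simp add: algebra_simps)
qed

lemma cons_Rhat_less:
  fixes W :: "nat \<Rightarrow> 'v::finite \<Rightarrow> 'b::real_normed_vector"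
  assumes close: "\<And>t i j. T \<le> t \<Longrightarrow> norm (W (Suc t) i - W t j) < \<delta>"
    and "0 < \<delta>" and "1 \<le> D" and "T \<le> k * D"
  shows "cons_Rhat E D W k i < D * \<delta>"
proof -
  have last_step: "Suc k * D - 1 = k * D + (D - 1)"
    using \<open>1 \<le> D\<close> by simp
  have "D - 1 < D"
    using \<open>1 \<le> D\<close> by simp
  with close \<open>0 < \<delta>\<close> \<open>T \<le> k * D\<close> have R_le: "cons_R E D W (k * D + (D - 1)) j \<le> (D - 1) * \<delta>"
    for j by (rule cons_R_le)
  have "R_update E W (k * D + (D - 1)) (cons_R E D W (k * D + (D - 1))) i < \<delta> + (D - 1) * \<delta>"
  proof (rule R_update_less)
    fix j
    have "norm (W (Suc (k * D + (D - 1))) i - W (k * D + (D - 1)) j) < \<delta>"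
      using \<open>T \<le> k * D\<close> by (intro close) simp
    with R_le[of j] show "norm (W (Suc (k * D + (D - 1))) i - W (k * D + (D - 1)) j)
        + cons_R E D W (k * D + (D - 1)) j < \<delta> + (D - 1) * \<delta>"
      by simp
  qed (use \<open>0 < \<delta>\<close> in \<open>simp add: add_pos_nonneg\<close>)
  also have "\<delta> + (D - 1) * \<delta> = D * \<delta>"
    using \<open>1 \<le> D\<close> by (simp add: of_nat_diff algebra_simps)
  finally show ?thesis
    unfolding cons_Rhat_def last_step .
qed

theorem proposition3p1:
  fixes E :: "('v::finite \<times> 'v) set"
    and D :: nat
    and P :: "'v \<Rightarrow> 'v \<Rightarrow> real"
    and \<epsilon> :: real
    and u0 :: "'v \<Rightarrow> real ^ 'p"
    and i :: 'v
  assumes "strongly_connected E"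
    and "diam_bound E D"
    and "1 \<le> D"
    and "column_stochastic P"
    and "primitive_mat P"
    and "weighted_adjacency P E"
    and "0 < \<epsilon>"
  shows "\<exists>k. cons_Rhat E D (cons_w P E u0) k i < \<epsilon>"
proof -
  obtain q N where "0 < q" and "\<forall>i j. q \<le> mat_pow P N i j"
    using primitive_column_stochastic_mat_pow_ge[OF assms(4,5)] by blast
  with assms(4,6) interpret ratio_consensus P E N q
    by unfold_locales simp_all
  have "0 < \<epsilon> / D"
    using assms(3,7) by simp
  then obtain T where close:
    "\<And>t i j. T \<le> t \<Longrightarrow> norm (cons_w P E u0 (Suc t) i - cons_w P E u0 t j) < \<epsilon> / D"
    using cons_w_converges_euclidean[of "\<epsilon> / D" u0] unfolding eventually_sequentially by blast
  have "T \<le> T * D"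
    using mult_le_mono2[OF assms(3), of T] by (simp only: mult_1_right)
  with close \<open>0 < \<epsilon> / D\<close> assms(3) have "cons_Rhat E D (cons_w P E u0) T i < D * (\<epsilon> / D)"
    by (rule cons_Rhat_less[where W = "cons_w P E u0"])
  also have "D * (\<epsilon> / D) = \<epsilon>"
    using assms(3) by simp
  finally show ?thesis
    by blast
qed

end
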